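(* Let $A\in\mathcal X$ be such that there exist linearly independent $v_1,\dots,v_n\in\mathbb Z^n$ with $\mathcal S_1(A)=\{\pm v_1,\dots,\pm v_n\}$, let $B$ be the matrix with columns $v_1,\dots,v_n$, and define $g_2:\mathbb R^{n-1}\to S_n$ by $g_2(x)=A\,B\,D(x)\,B^{-1}$, where for $x=(a_1,\dots,a_{n-1})$, $D(x)=\mathrm{diag}(e^{a_1},\dots,e^{a_{n-1}},e^{-a_1-\dots-a_{n-1}})$. Then there is $\epsilon>0$ such that for all $x$ with $|x|<\epsilon$: $g_2(x)\in\mathcal X$ if and only if $x=0$; and if moreover $x\neq0$ and $v\in\mathcal S_1(g_2(x))$, then $\lim_{t\to\infty}l_v(g_2(tx))=0$.
   Context: $S_n=\mathrm{SO}_n\backslash\mathrm{SL}_n\mathbb R$; a point is represented by a matrix up to left $\mathrm{SO}_n$ (here $A$ denotes a representative in $\mathrm{SL}_n\mathbb R$; $ABD(x)B^{-1}\in\mathrm{SL}_n\mathbb R$). For $v\in\mathbb R^n$, $l_v(A)=|Av|$. $\mathrm{syst}_1(A)=\min_{v\in\mathbb Z^n\setminus\{0\}}|Av|$, $\mathcal S_1(A)=\{v\in\mathbb Z^n:|Av|=\mathrm{syst}_1(A)\}$; $A$ is well-rounded if $\mathcal S_1(A)$ spans $\mathbb R^n$, and $\mathcal X$ is the set of well-rounded points. *)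

theory Defs
  imports "HOL-Analysis.Analysis"
begin

text \<open>Dimension n is encoded by the index type 'm + unit (so n = CARD('m) + 1 \<ge> 2);
  the index Inr () is the last coordinate.  Matrices are real^'n^'n (rows, columns).\<close>

definition int_vecs :: "(real^'n) set" where
  "int_vecs = {v. \<forall>i. v $ i \<in> \<int>}"

definition l_v :: "real^'n^'n \<Rightarrow> real^'n \<Rightarrow> real" where
  "l_v A v = norm (A *v v)"

definition syst1 :: "real^'n^'n \<Rightarrow> real" where
  "syst1 A = Inf {norm (A *v v) | v. v \<in> int_vecs \<and> v \<noteq> 0}"

definition S1 :: "real^'n^'n \<Rightarrow> (real^'n) set" where
  "S1 A = {v \<in> int_vecs. norm (A *v v) = syst1 A}"

definition well_rounded :: "real^'n^'n \<Rightarrow> bool" where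
  "well_rounded A \<longleftrightarrow> span (S1 A) = UNIV"

definition WR :: "(real^'n^'n) set" where
  "WR = {A. det A = 1 \<and> well_rounded A}"

definition diagD :: "real^'m \<Rightarrow> real^('m + unit)^('m + unit)" where
  "diagD x = (\<chi> i j. if i = j then
      (case i of Inl k \<Rightarrow> exp (x $ k) | Inr _ \<Rightarrow> exp (- (\<Sum>k\<in>UNIV. x $ k))) else 0)"

definition col_matrix :: "('n \<Rightarrow> real^'n) \<Rightarrow> real^'n^'n" where
  "col_matrix v = (\<chi> i j. v j $ i)"

definition g2 :: "real^('m+unit)^('m+unit) \<Rightarrow> (('m+unit) \<Rightarrow> real^('m+unit)) \<Rightarrow> real^'m
    \<Rightarrow> real^('m+unit)^('m+unit)" where
  "g2 A v x = A ** col_matrix v ** diagD x ** matrix_inv (col_matrix v)"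

end

theory Submission
  imports Defs
begin

(* Write B = col_matrix v and let y = diag_exponents x be the exponent vector
   of D(x) (coordinates a_1, ..., a_{n-1}, -(a_1 + ... + a_{n-1}); they sum to zero).
   Then g2(x) v_i = exp(y_i) A v_i, so on the minimal vectors of A the deformation only
   rescales lengths.  All other nonzero integer vectors w satisfy |A w| >= s' for some
   s' > syst1 A (a spectral gap, coming from the finiteness of lattice points in a ball),
   and for small x the matrix g2(x) shortens no vector by more than a factor close to 1.
   Hence for small x the minimal vectors of g2(x) are exactly the +-v_i whose exponent
   y_i is minimal.  If x <> 0, the zero-sum vector y is not constant, so some v_j is
   missing and g2(x) is not well rounded; moreover the minimal exponent is negative,
   so along the ray t x the length of such a minimal vector decays like exp(t min y). *)

lemma matrix_inv_mult:
  fixes M :: "real^'n^'n"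
  assumes "invertible M"
  shows "M ** matrix_inv M = mat 1" "matrix_inv M ** M = mat 1"
proof -
  from assms obtain M' where "M ** M' = mat 1 \<and> M' ** M = mat 1"
    unfolding invertible_def by blast
  hence "M ** matrix_inv M = mat 1 \<and> matrix_inv M ** M = mat 1"
    unfolding matrix_inv_def by (rule someI)
  thus "M ** matrix_inv M = mat 1" "matrix_inv M ** M = mat 1" by auto
qed

lemma invertible_bounded_below:
  fixes M :: "real^'n^'n"
  assumes "invertible M"
  obtains K where "K > 0" "\<And>u. norm u \<le> K * norm (M *v u)"
proof -
  obtain K where K: "K > 0" "\<And>u. norm (matrix_inv M *v u) \<le> K * norm u"
    using linear_bounded_pos[OF matrix_vector_mul_linear] by blast
  have "u = matrix_inv M *v (M *v u)" for u
    by (simp add: matrix_vector_mul_assoc matrix_inv_mult(2)[OF assms])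
  hence "norm u \<le> K * norm (M *v u)" for u by (metis K(2))
  with K(1) show thesis by (rule that)
qed

lemma norm_scale_components_le:
  fixes c :: "real^'n"
  assumes "\<And>i. \<bar>a i\<bar> \<le> e"
  shows "norm (\<chi> i. a i * c $ i) \<le> e * norm c"
proof -
  have e: "0 \<le> e" using assms[of undefined] by linarith
  have "norm (\<chi> i. a i * c $ i) = L2_set (\<lambda>i. \<bar>a i * c $ i\<bar>) UNIV"
    by (simp add: norm_vec_def)
  also have "\<dots> \<le> L2_set (\<lambda>i. e * \<bar>c $ i\<bar>) UNIV"
    by (rule L2_set_mono) (auto simp: abs_mult intro: mult_right_mono assms)
  also have "\<dots> = e * norm c"
    by (simp add: norm_vec_def L2_set_right_distrib[OF e])
  finally show ?thesis .
qed

lemma diagonal_perturbation_lower_bound: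
  fixes P :: "real^'n^'n"
  assumes "invertible P" and "\<eta> > 0"
  obtains \<delta> where "\<delta> > 0"
    "\<And>a c. (\<And>i. \<bar>a i - 1\<bar> \<le> \<delta>) \<Longrightarrow> (1 - \<eta>) * norm (P *v c) \<le> norm (P *v (\<chi> i. a i * c $ i))"
proof -
  obtain KP where KP: "KP > 0" "\<And>u. norm (P *v u) \<le> KP * norm u"
    using linear_bounded_pos[OF matrix_vector_mul_linear] by blast
  obtain KQ where KQ: "KQ > 0" "\<And>u. norm u \<le> KQ * norm (P *v u)"
    using invertible_bounded_below[OF assms(1)] by blast
  define \<delta> where "\<delta> = \<eta> / (KP * KQ)"
  have \<delta>: "\<delta> > 0" "KP * \<delta> * KQ = \<eta>"
    unfolding \<delta>_def using KP(1) KQ(1) assms(2) by auto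
  have "(1 - \<eta>) * norm (P *v c) \<le> norm (P *v (\<chi> i. a i * c $ i))"
    if a: "\<And>i. \<bar>a i - 1\<bar> \<le> \<delta>" for a c
  proof -
    define d where "d = (\<chi> i. (a i - 1) * c $ i)"
    have split: "(\<chi> i. a i * c $ i) = c + d"
      unfolding d_def by (simp add: vec_eq_iff algebra_simps)
    have "norm (P *v d) \<le> KP * norm d" by (rule KP(2))
    also have "\<dots> \<le> KP * (\<delta> * norm c)"
      unfolding d_def using KP(1) by (intro mult_left_mono norm_scale_components_le a) auto
    also have "\<dots> \<le> KP * (\<delta> * (KQ * norm (P *v c)))"
      using KP(1) \<delta>(1) KQ(2) by (intro mult_left_mono) auto
    also have "\<dots> = \<eta> * norm (P *v c)" using \<delta>(2) by (simp add: ac_simps)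
    finally have "norm (P *v d) \<le> \<eta> * norm (P *v c)" .
    moreover have "norm (P *v c) \<le> norm (P *v (c + d)) + norm (P *v d)"
      using norm_triangle_ineq4[of "P *v (c + d)" "P *v d"]
      by (simp add: matrix_vector_right_distrib)
    ultimately show ?thesis unfolding split by (simp add: algebra_simps)
  qed
  with \<delta>(1) show thesis by (rule that)
qed

lemma col_matrix_axis: "col_matrix v *v axis i 1 = v i"
  by (simp add: matrix_vector_mult_basis column_def col_matrix_def vec_eq_iff)

lemma invertible_col_matrix:
  fixes v :: "'n::finite \<Rightarrow> real^'n"
  assumes "inj v" and "independent (range v)"
  shows "invertible (col_matrix v)"
  unfolding invertible_left_inverse matrix_left_invertible_independent_columns
proof (intro allI impI)
  fix c :: "'n \<Rightarrow> real" and i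
  assume "(\<Sum>i\<in>UNIV. c i *s column i (col_matrix v)) = 0"
  hence "(\<Sum>i\<in>UNIV. c i *\<^sub>R v i) = 0"
    by (simp add: column_def col_matrix_def scalar_mult_eq_scaleR vec_eq_iff)
  moreover have "(\<Sum>w\<in>range v. c (inv v w) *\<^sub>R w) = (\<Sum>i\<in>UNIV. c i *\<^sub>R v i)"
    using assms(1) by (simp add: sum.reindex)
  ultimately have "c (inv v (v i)) = 0"
    using assms(2)[unfolded independent_explicit_module, rule_format,
        of "range v" "\<lambda>w. c (inv v w)" "v i"] by simp
  thus "c i = 0" using assms(1) by simp
qed

lemma finite_int_vecs_ball: "finite {w::real^'n. w \<in> int_vecs \<and> norm w \<le> R}"
proof -
  let ?I = "{k \<in> \<int>. \<bar>k\<bar> \<le> R}"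
  have fin: "finite (PiE UNIV (\<lambda>_::'n. ?I))"
    by (intro finite_PiE finite_abs_int_segment) auto
  have sub: "{w::real^'n. w \<in> int_vecs \<and> norm w \<le> R} \<subseteq> vec_lambda ` PiE UNIV (\<lambda>_. ?I)"
  proof
    fix w :: "real^'n" assume w: "w \<in> {w. w \<in> int_vecs \<and> norm w \<le> R}"
    have "w $ i \<in> ?I" for i
      using w order_trans[OF component_le_norm_cart[of w i]] by (auto simp: int_vecs_def)
    hence "vec_nth w \<in> PiE UNIV (\<lambda>_. ?I)" by auto
    thus "w \<in> vec_lambda ` PiE UNIV (\<lambda>_. ?I)" by (rule rev_image_eqI) simp
  qed
  show ?thesis using sub finite_imageI[OF fin] by (rule finite_subset)
qed

lemma syst1_le:
  assumes "w \<in> int_vecs" and "w \<noteq> 0"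
  shows "syst1 A \<le> norm (A *v w)"
  unfolding syst1_def
  by (rule cInf_lower) (use assms in \<open>auto intro: bdd_belowI[of _ 0]\<close>)

text \<open>This uses that only finitely many lattice vectors have image of
  length at most syst1 A + 1.\<close>

lemma syst1_gap:
  fixes A :: "real^'n^'n"
  assumes "invertible A"
  obtains s' where "s' > syst1 A"
    "\<And>w. w \<in> int_vecs \<Longrightarrow> w \<noteq> 0 \<Longrightarrow> w \<notin> S1 A \<Longrightarrow> s' \<le> norm (A *v w)"
proof -
  define s where "s = syst1 A"
  obtain K where K: "K > 0" "\<And>u. norm u \<le> K * norm (A *v u)"
    using invertible_bounded_below[OF assms] by blast
  define F where "F = {w. w \<in> int_vecs \<and> norm w \<le> K * (s + 1)} \<inter>
      {w. w \<noteq> 0 \<and> w \<notin> S1 A \<and> norm (A *v w) \<le> s + 1}"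
  have "finite F" unfolding F_def by (intro finite_Int disjI1 finite_int_vecs_ball)
  have F_gt: "s < norm (A *v w)" if "w \<in> F" for w
    using that syst1_le[of w A] unfolding F_def S1_def s_def by force
  define s' where "s' = Min (insert (s + 1) ((\<lambda>w. norm (A *v w)) ` F))"
  have "s < s'" unfolding s'_def using \<open>finite F\<close> F_gt by (subst Min_gr_iff) auto
  moreover have "s' \<le> norm (A *v w)"
    if w: "w \<in> int_vecs" "w \<noteq> 0" "w \<notin> S1 A" for w
  proof (cases "norm (A *v w) \<le> s + 1")
    case True
    have "norm w \<le> K * (s + 1)"
      using K True by (meson order_trans mult_left_mono less_imp_le)
    hence "w \<in> F" using w True unfolding F_def by blast
    thus ?thesis unfolding s'_def using \<open>finite F\<close> by (intro Min_le) auto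
  next
    case False
    have "s' \<le> s + 1" unfolding s'_def using \<open>finite F\<close> by (intro Min_le) auto
    thus ?thesis using False by simp
  qed
  ultimately show thesis using that unfolding s_def by blast
qed

lemma syst1_S1_from_candidates:
  fixes M :: "real^'n^'n"
  assumes C: "C \<subseteq> int_vecs" "0 \<notin> C" and c: "c \<in> C" "M *v c \<noteq> 0"
    and min_in_C: "\<And>w. w \<in> C \<Longrightarrow> norm (M *v c) \<le> norm (M *v w)"
    and longer_outside: "\<And>w. w \<in> int_vecs \<Longrightarrow> w \<noteq> 0 \<Longrightarrow> w \<notin> C \<Longrightarrow> norm (M *v c) < norm (M *v w)"
  shows "syst1 M = norm (M *v c)" "S1 M = {w \<in> C. norm (M *v w) = norm (M *v c)}"
proof -
  have le: "norm (M *v c) \<le> norm (M *v w)" if "w \<in> int_vecs" "w \<noteq> 0" for w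
    using that min_in_C longer_outside[of w] by force
  show syst: "syst1 M = norm (M *v c)"
    unfolding syst1_def using C c le by (intro cInf_eq_minimum) blast+
  show "S1 M = {w \<in> C. norm (M *v w) = norm (M *v c)}"
  proof (intro set_eqI iffI)
    fix w assume "w \<in> S1 M"
    hence w: "w \<in> int_vecs" "norm (M *v w) = norm (M *v c)" unfolding S1_def syst by auto
    hence "w \<noteq> 0" using c(2) by auto
    with w longer_outside[of w] show "w \<in> {w \<in> C. norm (M *v w) = norm (M *v c)}" by force
  qed (use C in \<open>auto simp: S1_def syst\<close>)
qed

definition diag_exponents :: "real^'m \<Rightarrow> real^('m + unit)" where
  "diag_exponents x = (\<chi> i. case i of Inl k \<Rightarrow> x $ k | Inr _ \<Rightarrow> - (\<Sum>k\<in>UNIV. x $ k))"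

lemma diagD_mult: "diagD x *v c = (\<chi> i. exp (diag_exponents x $ i) * c $ i)"
proof -
  have if_mult: "(if P then (a::real) else 0) * b = (if P then a * b else 0)" for P a b
    by simp
  have "diagD x = (\<chi> i j. if i = j then exp (diag_exponents x $ i) else 0)"
    by (simp add: diagD_def diag_exponents_def vec_eq_iff split: sum.split)
  thus ?thesis by (simp add: matrix_vector_mult_def vec_eq_iff if_mult)
qed

lemma sum_over_plus_unit:
  "(\<Sum>i\<in>(UNIV::('m::finite + unit) set). f i) = (\<Sum>k\<in>UNIV. f (Inl k)) + f (Inr ())"
  by (simp add: UNIV_Plus_UNIV[symmetric] sum.Plus UNIV_unit)

text \<open>The exponents sum to zero; this is why D(x) has determinant one.\<close>

lemma sum_diag_exponents: "(\<Sum>i\<in>UNIV. diag_exponents x $ i) = 0"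
  by (simp add: sum_over_plus_unit diag_exponents_def)

lemma linear_diag_exponents: "linear diag_exponents"
  by (rule linearI) (simp_all add: diag_exponents_def vec_eq_iff sum.distrib sum_distrib_left
      split: sum.split)

lemma diag_exponents_eq_0_iff: "diag_exponents x = 0 \<longleftrightarrow> x = 0"
proof
  assume "diag_exponents x = 0"
  hence "diag_exponents x $ Inl k = 0" for k by simp
  thus "x = 0" by (simp add: diag_exponents_def vec_eq_iff)
qed (simp add: linear_0[OF linear_diag_exponents])

lemma exp_diag_exponents_near_one:
  assumes "\<delta> > 0"
  shows "eventually (\<lambda>x. \<forall>i. \<bar>exp (diag_exponents x $ i) - 1\<bar> \<le> \<delta>) (nhds 0)"
proof (rule eventually_all_finite)
  fix i
  define f where "f x = exp (diag_exponents x $ i)" for x :: "real^'m"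
  have "isCont diag_exponents 0"
    using linear_continuous_at linear_diag_exponents linear_linear by blast
  hence "isCont f 0" unfolding f_def by (intro continuous_intros) auto
  moreover have "f 0 = 1" by (simp add: f_def linear_0[OF linear_diag_exponents])
  ultimately have "(f \<longlongrightarrow> 1) (nhds 0)" by (simp add: tendsto_nhds_iff isCont_def)
  hence "eventually (\<lambda>x. dist (f x) 1 < \<delta>) (nhds 0)" using assms tendsto_iff by blast
  thus "eventually (\<lambda>x. \<bar>exp (diag_exponents x $ i) - 1\<bar> \<le> \<delta>) (nhds 0)"
    by eventually_elim (simp add: f_def dist_real_def)
qed

lemma zero_sum_vector_min_nonpos:
  fixes y :: "real^'n"
  assumes "(\<Sum>i\<in>UNIV. y $ i) = 0" and "\<And>i. m \<le> y $ i"
  shows "m \<le> 0"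
proof -
  have "real CARD('n) * m \<le> 0"
    using sum_mono[of UNIV "\<lambda>_. m" "\<lambda>i. y $ i"] assms by simp
  thus ?thesis by (simp add: mult_le_0_iff)
qed

lemma zero_sum_vector_min:
  fixes y :: "real^'n"
  assumes sum0: "(\<Sum>i\<in>UNIV. y $ i) = 0" and "y \<noteq> 0" and min: "\<And>i. m \<le> y $ i"
  shows "m < 0" and "\<exists>i. m < y $ i"
proof -
  have not_all_zero: "\<not> (\<forall>i\<in>UNIV. y $ i = 0)" using \<open>y \<noteq> 0\<close> by (simp add: vec_eq_iff)
  have "\<exists>i. y $ i < 0"
  proof (rule ccontr)
    assume "\<not> (\<exists>i. y $ i < 0)"
    hence "\<forall>i\<in>UNIV. 0 \<le> y $ i" by (simp add: not_less)
    thus False using sum_nonneg_eq_0_iff[of UNIV "\<lambda>i. y $ i"] sum0 not_all_zero by simp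
  qed
  then obtain i where "y $ i < 0" ..
  thus "m < 0" using min[of i] by linarith
  have "\<exists>i. 0 < y $ i"
  proof (rule ccontr)
    assume "\<not> (\<exists>i. 0 < y $ i)"
    hence "\<forall>i\<in>UNIV. 0 \<le> - y $ i" by (simp add: not_less)
    moreover have "(\<Sum>i\<in>UNIV. - y $ i) = 0" using sum0 by (simp add: sum_negf)
    ultimately show False using sum_nonneg_eq_0_iff[of UNIV "\<lambda>i. - y $ i"] not_all_zero by simp
  qed
  with \<open>m < 0\<close> show "\<exists>i. m < y $ i" using order.strict_trans by blast
qed

definition min_exponent :: "real^'m \<Rightarrow> real" where
  "min_exponent x = Min (range (\<lambda>i. diag_exponents x $ i))"

lemma min_exponent_le: "min_exponent x \<le> diag_exponents x $ i"
  unfolding min_exponent_def by (rule Min_le) auto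

lemma min_exponent_attained: "\<exists>j. diag_exponents x $ j = min_exponent x"
proof -
  have "min_exponent x \<in> range (\<lambda>i. diag_exponents x $ i)"
    unfolding min_exponent_def by (rule Min_in) auto
  thus ?thesis by (metis rangeE)
qed

lemma min_exponent_nonpos: "min_exponent x \<le> 0"
  by (rule zero_sum_vector_min_nonpos[OF sum_diag_exponents min_exponent_le])

lemma min_exponent_off_zero:
  assumes "x \<noteq> 0"
  shows "min_exponent x < 0" and "\<exists>i. min_exponent x < diag_exponents x $ i"
  using zero_sum_vector_min[OF sum_diag_exponents _ min_exponent_le] assms
  by (simp_all add: diag_exponents_eq_0_iff)

text \<open>This is what prevents the deformed lattice from being well
  rounded once some v j is no longer minimal.\<close>

lemma not_in_span_of_others:
  fixes v :: "'i \<Rightarrow> 'a::real_vector"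
  assumes "inj v" and "independent (range v)"
    and S: "S \<subseteq> {w. \<exists>i. i \<noteq> j \<and> (w = v i \<or> w = - v i)}"
  shows "v j \<notin> span S"
proof
  have "S \<subseteq> span (range v - {v j})"
  proof
    fix w assume "w \<in> S"
    then obtain i where i: "i \<noteq> j" "w = v i \<or> w = - v i" using S by blast
    hence "v i \<in> span (range v - {v j})" using assms(1) by (intro span_base) (auto simp: inj_def)
    thus "w \<in> span (range v - {v j})" using i(2) span_neg by auto
  qed
  moreover assume "v j \<in> span S"
  ultimately have "v j \<in> span (range v - {v j})" using span_mono span_span by blast
  thus False using assms(2) unfolding dependent_def by blast
qed

lemma g2_mult_vec:
  "g2 A v x *v w = (A ** col_matrix v) *v (diagD x *v (matrix_inv (col_matrix v) *v w))"
  by (simp add: g2_def flip: matrix_vector_mul_assoc)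

lemma g2_basis:
  assumes "invertible (col_matrix v)"
  shows "g2 A v x *v v i = exp (diag_exponents x $ i) *\<^sub>R (A *v v i)"
proof -
  have "matrix_inv (col_matrix v) *v v i = axis i 1"
    by (metis col_matrix_axis matrix_inv_mult(2)[OF assms] matrix_vector_mul_assoc
        matrix_vector_mul_lid)
  moreover have "diagD x *v axis i 1 = exp (diag_exponents x $ i) *\<^sub>R axis i 1"
    by (simp add: diagD_mult vec_eq_iff axis_def)
  ultimately show ?thesis
    by (simp add: g2_mult_vec matrix_vector_mult_scaleR col_matrix_axis
        flip: matrix_vector_mul_assoc)
qed

lemma norm_g2_signed_basis:
  assumes "invertible (col_matrix v)" and "w = v i \<or> w = - v i"
  shows "norm (g2 A v x *v w) = exp (diag_exponents x $ i) * norm (A *v v i)"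
  using assms(2) g2_basis[OF assms(1), of A x i] by (auto simp: vec.neg)

lemma g2_zero:
  assumes "invertible (col_matrix v)"
  shows "g2 A v 0 = A"
proof -
  have D0: "diagD (0::real^'m) = mat 1"
    by (simp add: diagD_def mat_def vec_eq_iff split: sum.split)
  show ?thesis
    by (simp add: g2_def D0 matrix_mul_rid matrix_inv_mult(1)[OF assms] flip: matrix_mul_assoc)
qed

lemma g2_lower_bound:
  assumes "invertible A" and "invertible (col_matrix v)" and "\<eta> > 0"
  shows "eventually (\<lambda>x. \<forall>w. (1 - \<eta>) * norm (A *v w) \<le> norm (g2 A v x *v w)) (nhds 0)"
proof -
  define B where "B = col_matrix v"
  obtain \<delta> where "\<delta> > 0" and perturb: "\<And>a c. (\<And>i. \<bar>a i - 1\<bar> \<le> \<delta>) \<Longrightarrow>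
      (1 - \<eta>) * norm ((A ** B) *v c) \<le> norm ((A ** B) *v (\<chi> i. a i * c $ i))"
    using diagonal_perturbation_lower_bound[OF invertible_mult[OF assms(1,2)] assms(3)]
    unfolding B_def by blast
  show ?thesis using exp_diag_exponents_near_one[OF \<open>\<delta> > 0\<close>]
  proof eventually_elim
    case (elim x)
    show ?case
    proof
      fix w
      define c where "c = matrix_inv B *v w"
      have "(A ** B) *v c = A *v ((B ** matrix_inv B) *v w)"
        by (simp add: c_def matrix_vector_mul_assoc matrix_mul_assoc)
      hence "(A ** B) *v c = A *v w"
        by (simp add: B_def matrix_inv_mult(1)[OF assms(2)])
      moreover have "g2 A v x *v w = (A ** B) *v (\<chi> i. exp (diag_exponents x $ i) * c $ i)"
        by (simp add: g2_mult_vec diagD_mult B_def c_def)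
      ultimately show "(1 - \<eta>) * norm (A *v w) \<le> norm (g2 A v x *v w)"
        using perturb[of "\<lambda>i. exp (diag_exponents x $ i)" c] elim by simp
    qed
  qed
qed

text \<open>Since
  g2(x) rescales the length of +-v i by exp y_i, and the smallest factor exp(min y) is at
  most 1, the minimal vectors of g2(x) are exactly the +-v i of minimal exponent.\<close>

lemma S1_g2_from_gap:
  assumes Binv: "invertible (col_matrix v)"
    and S1A: "S1 A = {w. \<exists>i. w = v i \<or> w = - v i}" and "syst1 A > 0"
    and longer: "\<And>w. w \<in> int_vecs \<Longrightarrow> w \<noteq> 0 \<Longrightarrow> w \<notin> S1 A \<Longrightarrow>
      syst1 A < norm (g2 A v x *v w)"
  shows "S1 (g2 A v x) =
    {w. \<exists>i. diag_exponents x $ i = min_exponent x \<and> (w = v i \<or> w = - v i)}"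
proof -
  define s where "s = syst1 A"
  define m where "m = min_exponent x"
  have "v i \<in> S1 A" for i unfolding S1A by blast
  hence "norm (A *v v i) = s" for i unfolding S1_def s_def by blast
  hence norm_g2: "w = v i \<or> w = - v i \<Longrightarrow> norm (g2 A v x *v w) = exp (diag_exponents x $ i) * s"
    for w i using norm_g2_signed_basis[OF Binv] by simp
  obtain j where j: "diag_exponents x $ j = m" using min_exponent_attained m_def by blast
  have "exp m * s \<le> s" using min_exponent_nonpos[of x] \<open>syst1 A > 0\<close> by (simp add: m_def s_def)
  hence outside: "exp m * s < norm (g2 A v x *v w)"
    if "w \<in> int_vecs" "w \<noteq> 0" "w \<notin> S1 A" for w
    using longer[OF that] s_def by linarith
  have S1_g2: "S1 (g2 A v x) = {w \<in> S1 A. norm (g2 A v x *v w) = norm (g2 A v x *v v j)}"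
  proof (rule syst1_S1_from_candidates)
    show "S1 A \<subseteq> int_vecs" unfolding S1_def by blast
    show "0 \<notin> S1 A" using \<open>syst1 A > 0\<close> unfolding S1_def by auto
    show "v j \<in> S1 A" unfolding S1A by blast
    show "g2 A v x *v v j \<noteq> 0" using norm_g2[of "v j" j] \<open>syst1 A > 0\<close> s_def by auto
    show "norm (g2 A v x *v v j) \<le> norm (g2 A v x *v w)" if w: "w \<in> S1 A" for w
    proof -
      obtain i where i: "w = v i \<or> w = - v i" using w unfolding S1A by blast
      have "exp m \<le> exp (diag_exponents x $ i)" using min_exponent_le[of x] by (simp add: m_def)
      thus ?thesis using norm_g2[OF i] norm_g2[of "v j" j] j \<open>syst1 A > 0\<close> s_def by simp
    qed
    show "norm (g2 A v x *v v j) < norm (g2 A v x *v w)"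
      if "w \<in> int_vecs" "w \<noteq> 0" "w \<notin> S1 A" for w
      using outside[OF that] norm_g2[of "v j" j] j by simp
  qed
  show ?thesis
  proof (intro set_eqI iffI)
    fix w assume "w \<in> S1 (g2 A v x)"
    then obtain i where i: "w = v i \<or> w = - v i"
      and eq: "norm (g2 A v x *v w) = norm (g2 A v x *v v j)"
      unfolding S1_g2 S1A by blast
    have "diag_exponents x $ i = min_exponent x"
      using eq norm_g2[OF i] norm_g2[of "v j" j] j \<open>syst1 A > 0\<close> s_def by (simp add: m_def)
    with i show "w \<in> {w. \<exists>i. diag_exponents x $ i = min_exponent x \<and> (w = v i \<or> w = - v i)}"
      by blast
  next
    fix w assume "w \<in> {w. \<exists>i. diag_exponents x $ i = min_exponent x \<and> (w = v i \<or> w = - v i)}"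
    then obtain i where i: "diag_exponents x $ i = m" "w = v i \<or> w = - v i"
      unfolding m_def by blast
    have "norm (g2 A v x *v w) = norm (g2 A v x *v v j)"
      using norm_g2[OF i(2)] norm_g2[of "v j" j] i(1) j by simp
    with i(2) show "w \<in> S1 (g2 A v x)" unfolding S1_g2 S1A by blast
  qed
qed

text \<open>The hypothesis of the previous lemma holds for all x near 0: by the spectral gap the
  non-minimal lattice vectors of A have length at least s' > syst1 A, and g2(x) shortens
  them by at most a factor 1 - \<eta> with (1 - \<eta>) s' > syst1 A.\<close>

lemma S1_g2_near_zero:
  fixes A :: "real^('m::finite + unit)^('m + unit)"
    and v :: "('m + unit) \<Rightarrow> real^('m + unit)"
  assumes Ainv: "invertible A" and "inj v" and "independent (range v)"
    and S1A: "S1 A = {w. \<exists>i. w = v i \<or> w = - v i}"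
  shows "eventually (\<lambda>x. S1 (g2 A v x) =
    {w. \<exists>i. diag_exponents x $ i = min_exponent x \<and> (w = v i \<or> w = - v i)}) (nhds 0)"
proof -
  have Binv: "invertible (col_matrix v)" using invertible_col_matrix assms(2,3) by blast
  define s where "s = syst1 A"
  obtain i where "v i \<in> S1 A" unfolding S1A by blast
  hence "norm (A *v v i) = s" unfolding S1_def s_def by blast
  moreover have "v i \<noteq> 0" using assms(3) dependent_zero by (metis rangeI)
  hence "A *v v i \<noteq> 0"
    using inj_matrix_vector_mult[OF Ainv] by (metis injD matrix_vector_mult_0_right)
  ultimately have "s > 0" by (metis zero_less_norm_iff)
  obtain s' where "s' > s"
    and gap: "\<And>w. w \<in> int_vecs \<Longrightarrow> w \<noteq> 0 \<Longrightarrow> w \<notin> S1 A \<Longrightarrow> s' \<le> norm (A *v w)"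
    using syst1_gap[OF Ainv] unfolding s_def by blast
  define \<eta> where "\<eta> = (s' - s) / (2 * s')"
  have "\<eta> > 0" and "s < (1 - \<eta>) * s'" and "\<eta> < 1"
    unfolding \<eta>_def using \<open>s > 0\<close> \<open>s' > s\<close> by (auto simp: field_simps)
  show ?thesis using g2_lower_bound[OF Ainv Binv \<open>\<eta> > 0\<close>]
  proof eventually_elim
    case (elim x)
    have "syst1 A < norm (g2 A v x *v w)"
      if w: "w \<in> int_vecs" "w \<noteq> 0" "w \<notin> S1 A" for w
    proof -
      have "syst1 A < (1 - \<eta>) * s'" using \<open>s < (1 - \<eta>) * s'\<close> s_def by simp
      also have "\<dots> \<le> (1 - \<eta>) * norm (A *v w)"
        using gap[OF w] \<open>\<eta> < 1\<close> by (intro mult_left_mono) auto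
      also have "\<dots> \<le> norm (g2 A v x *v w)" using elim by blast
      finally show ?thesis .
    qed
    thus ?case using S1_g2_from_gap[OF Binv S1A] \<open>s > 0\<close> s_def by blast
  qed
qed

text \<open>Away from 0, g2(x) is not well rounded: some v j has non-minimal exponent, so no
  minimal vector of g2(x) is +-v j, and v j is outside their span.\<close>

lemma g2_not_well_rounded:
  assumes "inj v" and "independent (range v)" and "x \<noteq> 0"
    and S1x: "S1 (g2 A v x) =
      {w. \<exists>i. diag_exponents x $ i = min_exponent x \<and> (w = v i \<or> w = - v i)}"
  shows "\<not> well_rounded (g2 A v x)"
proof -
  obtain j where j: "min_exponent x < diag_exponents x $ j"
    using min_exponent_off_zero(2)[OF assms(3)] by blast
  have "S1 (g2 A v x) \<subseteq> {w. \<exists>i. i \<noteq> j \<and> (w = v i \<or> w = - v i)}"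
  proof
    fix w assume "w \<in> S1 (g2 A v x)"
    then obtain i where i: "diag_exponents x $ i = min_exponent x" "w = v i \<or> w = - v i"
      unfolding S1x by blast
    moreover have "i \<noteq> j" using i(1) j by auto
    ultimately show "w \<in> {w. \<exists>i. i \<noteq> j \<and> (w = v i \<or> w = - v i)}" by blast
  qed
  hence "v j \<notin> span (S1 (g2 A v x))" by (rule not_in_span_of_others[OF assms(1,2)])
  thus ?thesis unfolding well_rounded_def by blast
qed

lemma l_v_g2_ray_tendsto_zero:
  assumes "invertible (col_matrix v)" and "x \<noteq> 0"
    and "diag_exponents x $ i = min_exponent x" and "w = v i \<or> w = - v i"
  shows "((\<lambda>t::real. l_v (g2 A v (t *\<^sub>R x)) w) \<longlongrightarrow> 0) at_top"
proof -
  define m where "m = min_exponent x"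
  have "l_v (g2 A v (t *\<^sub>R x)) w = exp (m * t) * norm (A *v v i)" for t
    using norm_g2_signed_basis[OF assms(1,4)] assms(3)
    by (simp add: l_v_def m_def linear_cmul[OF linear_diag_exponents] mult.commute)
  moreover have "filterlim (\<lambda>t. m * t) at_bot at_top"
    using min_exponent_off_zero(1)[OF assms(2)] unfolding m_def
    by (intro filterlim_tendsto_neg_mult_at_bot[OF tendsto_const _ filterlim_ident])
  hence "((\<lambda>t. exp (m * t) * norm (A *v v i)) \<longlongrightarrow> 0 * norm (A *v v i)) at_top"
    by (intro tendsto_mult tendsto_const filterlim_compose[OF exp_at_bot])
  ultimately show ?thesis by simp
qed

theorem mainTheorem12:
  fixes A :: "real^('m::finite + unit)^('m + unit)"
    and v :: "('m + unit) \<Rightarrow> real^('m + unit)"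
  assumes "A \<in> WR"
    and "\<And>i. v i \<in> int_vecs"
    and "inj v" and "independent (range v)"
    and "S1 A = {w. \<exists>i. w = v i \<or> w = - v i}"
  shows "\<exists>\<epsilon>>0. \<forall>x::real^'m. norm x < \<epsilon> \<longrightarrow>
           ((g2 A v x \<in> WR \<longleftrightarrow> x = 0) \<and>
            (x \<noteq> 0 \<longrightarrow> (\<forall>w\<in>S1 (g2 A v x).
               ((\<lambda>t::real. l_v (g2 A v (t *\<^sub>R x)) w) \<longlongrightarrow> 0) at_top)))"
proof -
  have Ainv: "invertible A" using assms(1) by (simp add: WR_def invertible_det_nz)
  have Binv: "invertible (col_matrix v)" using invertible_col_matrix assms(3,4) by blast
  obtain \<epsilon> where "\<epsilon> > 0" and S1_near: "\<And>x::real^'m. norm x < \<epsilon> \<Longrightarrow> S1 (g2 A v x) =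
      {w. \<exists>i. diag_exponents x $ i = min_exponent x \<and> (w = v i \<or> w = - v i)}"
    using S1_g2_near_zero[OF Ainv assms(3-5)] unfolding eventually_nhds_metric dist_norm by auto
  have "(g2 A v x \<in> WR \<longleftrightarrow> x = 0) \<and> (x \<noteq> 0 \<longrightarrow> (\<forall>w\<in>S1 (g2 A v x).
      ((\<lambda>t::real. l_v (g2 A v (t *\<^sub>R x)) w) \<longlongrightarrow> 0) at_top))"
    if "norm x < \<epsilon>" for x :: "real^'m"
  proof (cases "x = 0")
    case True
    thus ?thesis using assms(1) g2_zero[OF Binv] by simp
  next
    case False
    have "g2 A v x \<notin> WR"
      using g2_not_well_rounded[OF assms(3,4) False S1_near[OF that]] by (simp add: WR_def)
    moreover have "((\<lambda>t::real. l_v (g2 A v (t *\<^sub>R x)) w) \<longlongrightarrow> 0) at_top"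
      if "w \<in> S1 (g2 A v x)" for w
      using that l_v_g2_ray_tendsto_zero[OF Binv False] unfolding S1_near[OF \<open>norm x < \<epsilon>\<close>]
      by blast
    ultimately show ?thesis using False by blast
  qed
  with \<open>\<epsilon> > 0\<close> show ?thesis by blast
qed
end
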